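(* Suppose $f$ is $L_f$-smooth and $\mu_f$-strongly convex, $L_{\mathbf S}^{\max}<\infty$, and let $x^\star_{\mathcal D}$ be the minimizer of $\tilde f$. Let $0<\gamma\le 1/(L_fL_{\mathbf S}^{\max})$ and let $(x^t)$ be generated by the Double Sketched GD iteration. Then for every $T\ge 0$, $$\mathbb E\|x^T-x^\star_{\mathcal D}\|^2\le(1-\gamma\mu_{\mathcal D}\mu_f)^T\|x^0-x^\star_{\mathcal D}\|^2+\frac{2\gamma L_fL_{\mathbf S}^{\max}}{\mu_f\mu_{\mathcal D}}\big(\tilde f^{\inf}-f^{\inf}\big).$$
   Context: Let $f:\mathbb R^d\to\mathbb R$, fix $s\in\mathbb R^d$, and let $\mathcal D$ be a distribution of random matrices $\mathbf S\in\mathbb R^{d\times d}$ with $\mathbb E[\mathbf S]=I$ and $\mathbb E[\mathbf S^\top\mathbf S]$ finite. Define $f_{\mathbf S}(x)=f(s+\mathbf S(x-s))$, $\tilde f(x)=\mathbb E_{\mathbf S\sim\mathcal D}[f_{\mathbf S}(x)]$, $\tilde f^{\inf}=\inf_x\tilde f(x)$, $\mu_{\mathcal D}=\lambda_{\min}(\mathbb E[\mathbf S^\top\mathbf S])$, and $L_{\mathbf S}^{\max}$ the smallest constant with $\lambda_{\max}(\mathbf S^\top\mathbf S)\le L_{\mathbf S}^{\max}$ a.s. Double Sketched GD: given $x^0\in\mathbb R^d$, for $t\ge0$ draw $\mathbf S^t\sim\mathcal D$ independently of the past and set $x^{t+1}=x^t-\gamma(\mathbf S^t)^\top\nabla f(s+\mathbf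 S^t(x^t-s))$. $f$ is $L_f$-smooth if differentiable, $f(x+h)\le f(x)+\langle\nabla f(x),h\rangle+\frac{L_f}{2}\|h\|^2$ for all $x,h$, and bounded below by $f^{\inf}$; $\mu_f$-strongly convex if $f(x+h)\ge f(x)+\langle\nabla f(x),h\rangle+\frac{\mu_f}{2}\|h\|^2$ for all $x,h$. *)

theory Defs
  imports "HOL-Probability.Probability"
begin

type_synonym 'n vec = "real ^ 'n"
type_synonym 'n mat = "real ^ 'n ^ 'n"

text \<open>Real eigenvalues of a square matrix, and the largest / smallest one
  (used only for symmetric matrices, where the spectrum is real, finite and nonempty).\<close>
definition eigvals :: "('n::finite) mat \<Rightarrow> real set" where
  "eigvals A = {l. \<exists>v::'n vec. v \<noteq> 0 \<and> A *v v = l *\<^sub>R v}"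

definition lambda_max :: "('n::finite) mat \<Rightarrow> real" where
  "lambda_max A = Max (eigvals A)"

definition lambda_min :: "('n::finite) mat \<Rightarrow> real" where
  "lambda_min A = Min (eigvals A)"

definition L_smooth :: "real \<Rightarrow> (('n::finite) vec \<Rightarrow> real) \<Rightarrow> ('n vec \<Rightarrow> 'n vec) \<Rightarrow> bool" where
  "L_smooth L f g \<longleftrightarrow>
     (\<forall>x. (f has_derivative (\<lambda>h. g x \<bullet> h)) (at x)) \<and>
     (\<forall>x h. f (x + h) \<le> f x + g x \<bullet> h + L / 2 * (norm h)\<^sup>2) \<and>
     bdd_below (range f)"

definition strongly_convex :: "real \<Rightarrow> (('n::finite) vec \<Rightarrow> real) \<Rightarrow> ('n vec \<Rightarrow> 'n vec) \<Rightarrow> bool" where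
  "strongly_convex mu f g \<longleftrightarrow> mu > 0 \<and>
     (\<forall>x h. f (x + h) \<ge> f x + g x \<bullet> h + mu / 2 * (norm h)\<^sup>2)"

definition f_sk :: "(('n::finite) vec \<Rightarrow> real) \<Rightarrow> 'n vec \<Rightarrow> 'n mat \<Rightarrow> 'n vec \<Rightarrow> real" where
  "f_sk f s S x = f (s + S *v (x - s))"

definition f_tilde :: "'n mat measure \<Rightarrow> (('n::finite) vec \<Rightarrow> real) \<Rightarrow> 'n vec \<Rightarrow> 'n vec \<Rightarrow> real" where
  "f_tilde D f s x = (\<integral>S. f_sk f s S x \<partial>D)"

definition mu_D :: "('n::finite) mat measure \<Rightarrow> real" where
  "mu_D D = lambda_min (\<integral>S. transpose S ** S \<partial>D)"

definition L_S_max :: "('n::finite) mat measure \<Rightarrow> real" where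
  "L_S_max D = Inf {L. AE S in D. lambda_max (transpose S ** S) \<le> L}"

primrec dsgd :: "(('n::finite) vec \<Rightarrow> 'n vec) \<Rightarrow> real \<Rightarrow> 'n vec \<Rightarrow> 'n vec \<Rightarrow> (nat \<Rightarrow> 'n mat) \<Rightarrow> nat \<Rightarrow> 'n vec" where
  "dsgd g \<gamma> s x0 Ss 0 = x0"
| "dsgd g \<gamma> s x0 Ss (Suc t) =
     dsgd g \<gamma> s x0 Ss t - \<gamma> *\<^sub>R (transpose (Ss t) *v g (s + Ss t *v (dsgd g \<gamma> s x0 Ss t - s)))"

end

theory Submission
  imports Defs
begin

(* Write z for the minimiser of f~ and y = s + S (x - s), and expand |x - gamma S^T grad f(y) - z|^2.
   Strong convexity of f along S (z - x) bounds the cross term by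
   f(y) - f(s + S (z - s)) + mu_f/2 |S (x - z)|^2, and one smoothness step of length 1/(L_f L_S)
   along -S S^T grad f(y) gives |S^T grad f(y)|^2 <= 2 L_f L_S (f(y) - f_inf). Averaging over S
   turns E|S (x - z)|^2 into at least mu_D |x - z|^2 and function values into f~. As
   gamma L_f L_S <= 1 and f~(z) <= f~(x), the f~(x) terms can be dropped, leaving
     E|x' - z|^2 <= (1 - gamma mu_D mu_f) |x - z|^2 + 2 gamma^2 L_f L_S (f~(z) - f_inf)
   for the next iterate x'. Since S^t is independent of x^t, this bound applies inside the
   expectation, and the affine recursion unrolls to the stated bound. *)

lemma psd_form_eq_0_imp_eq_0:
  fixes B :: "'a::real_inner \<Rightarrow> 'a"
  assumes lin: "linear B" and sym: "\<And>x y. B x \<bullet> y = x \<bullet> B y"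
    and psd: "\<And>x. 0 \<le> x \<bullet> B x" and v: "v \<bullet> B v = 0"
  shows "B v = 0"
proof -
  define w where "w = B v"
  define a where "a = w \<bullet> w"
  define c where "c = w \<bullet> B w"
  have c0: "0 \<le> c" and a0: "0 \<le> a" using psd unfolding a_def c_def by auto
  have Bt: "B (v - t *\<^sub>R w) = w - t *\<^sub>R B w" for t
    using lin unfolding w_def by (simp add: linear_diff linear_scale)
  have vBw: "v \<bullet> B w = a" using sym unfolding a_def w_def by (metis inner_commute)
  have form: "(v - t *\<^sub>R w) \<bullet> B (v - t *\<^sub>R w) = t^2 * c - 2 * t * a" for t
    unfolding Bt using vBw v unfolding a_def c_def w_def[symmetric]
    by (simp add: inner_diff_left inner_diff_right power2_eq_square algebra_simps inner_commute)
  \<comment> \<open>Evaluate the form at \<open>t = a / (c + 1)\<close>, where the linear term dominates.\<close>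
  define t where "t = a / (c + 1)"
  have t0: "0 \<le> t" using a0 c0 unfolding t_def by simp
  have "t * c \<le> a" using a0 c0 unfolding t_def by (simp add: field_simps)
  then have "t * (t * c) \<le> t * a" using t0 by (rule mult_left_mono)
  then have "t^2 * c \<le> t * a" by (simp add: power2_eq_square mult.assoc)
  moreover have "0 \<le> t^2 * c - 2 * t * a" using form[of t] psd by metis
  ultimately have "t * a \<le> 0" by linarith
  then have "a * a \<le> 0" using c0 unfolding t_def by (simp add: field_simps)
  then have "a = 0" using a0 by (metis mult_nonneg_nonneg antisym mult_eq_0_iff)
  then show ?thesis unfolding a_def w_def by simp
qed

lemma quadratic_form_scaleR:
  "(c *\<^sub>R x) \<bullet> ((A::real^'n^'n) *v (c *\<^sub>R x)) = c^2 * (x \<bullet> (A *v x))"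
  by (simp add: matrix_vector_mult_scaleR power2_eq_square)

lemma eigval_le_quadratic_form:
  fixes A :: "real^'n^'n"
  assumes sym: "\<And>x y. (A *v x) \<bullet> y = x \<bullet> (A *v y)"
  shows "\<exists>m \<in> eigvals A. \<forall>x. m * (norm x)^2 \<le> x \<bullet> (A *v x)"
proof -
  obtain i :: 'n where True by simp
  then have ne: "sphere (0::real^'n) 1 \<noteq> {}" by (metis empty_iff mem_sphere_0 norm_axis_1)
  have cont: "continuous_on (sphere 0 1) (\<lambda>x. x \<bullet> (A *v x))"
    by (intro continuous_intros)
  obtain v where v: "v \<in> sphere 0 1"
    and v_min: "\<forall>y \<in> sphere 0 1. v \<bullet> (A *v v) \<le> y \<bullet> (A *v y)"
    using continuous_attains_inf[OF compact_sphere ne cont] by blast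
  define m where "m = v \<bullet> (A *v v)"
  have bound: "m * (norm x)^2 \<le> x \<bullet> (A *v x)" for x
  proof (cases "x = 0")
    case False
    then have "m \<le> (1 / norm x)^2 * (x \<bullet> (A *v x))"
      using v_min[rule_format, of "(1 / norm x) *\<^sub>R x"] unfolding m_def quadratic_form_scaleR by simp
    then show ?thesis using False by (simp add: field_simps)
  qed simp
  \<comment> \<open>\<open>A - m I\<close> is positive semidefinite and its form vanishes at the minimiser \<open>v\<close>.\<close>
  define B where "B x = A *v x - m *\<^sub>R x" for x
  have "B v = 0"
  proof (rule psd_form_eq_0_imp_eq_0[where B = B])
    show "linear B" unfolding B_def
      by (rule linearI) (auto simp: algebra_simps matrix_vector_right_distrib matrix_vector_mult_scaleR)
    show "B x \<bullet> y = x \<bullet> B y" for x y using sym unfolding B_def by (simp add: inner_diff_left inner_diff_right)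
    show "0 \<le> x \<bullet> B x" for x using bound[of x] unfolding B_def by (simp add: inner_diff_right power2_norm_eq_inner)
    show "v \<bullet> B v = 0" using v unfolding B_def m_def by (simp add: inner_diff_right power2_norm_eq_inner[symmetric])
  qed
  moreover have "v \<noteq> 0" using v by auto
  ultimately have "m \<in> eigvals A" unfolding B_def eigvals_def by auto
  with bound show ?thesis by blast
qed

lemma finite_eigvals:
  fixes A :: "real^'n^'n"
  assumes sym: "\<And>x y. (A *v x) \<bullet> y = x \<bullet> (A *v y)"
  shows "finite (eigvals A)"
proof -
  define u where "u l = (SOME v::real^'n. v \<noteq> 0 \<and> A *v v = l *\<^sub>R v)" for l
  have u: "u l \<noteq> 0 \<and> A *v u l = l *\<^sub>R u l" if l: "l \<in> eigvals A" for l
  proof -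
    obtain v where "v \<noteq> 0 \<and> A *v v = l *\<^sub>R v" using l unfolding eigvals_def by auto
    then show ?thesis unfolding u_def by (rule someI)
  qed
  have inj: "inj_on u (eigvals A)"
  proof (rule inj_onI)
    fix l k assume l: "l \<in> eigvals A" and k: "k \<in> eigvals A" and "u l = u k"
    then have "l *\<^sub>R u l = k *\<^sub>R u l" using u[OF l] u[OF k] by metis
    then show "l = k" using u[OF l] by simp
  qed
  have orth: "pairwise orthogonal (u ` eigvals A)"
  proof (clarsimp simp: pairwise_def orthogonal_def)
    fix l k assume l: "l \<in> eigvals A" and k: "k \<in> eigvals A" and "u l \<noteq> u k"
    then have "l \<noteq> k" by auto
    moreover have "l * (u l \<bullet> u k) = k * (u l \<bullet> u k)"
      using sym[of "u l" "u k"] u[OF l] u[OF k] by simp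
    ultimately show "u l \<bullet> u k = 0" by simp
  qed
  have "0 \<notin> u ` eigvals A" using u by auto
  then have "independent (u ` eigvals A)" by (rule pairwise_orthogonal_independent[OF orth])
  then have "finite (u ` eigvals A)" using independent_bound by blast
  then show ?thesis using inj by (rule finite_imageD)
qed

lemma
  fixes A :: "real^'n^'n"
  assumes sym: "\<And>x y. (A *v x) \<bullet> y = x \<bullet> (A *v y)"
  shows lambda_min_in_eigvals: "lambda_min A \<in> eigvals A"
    and lambda_min_le_quadratic_form: "lambda_min A * (norm x)^2 \<le> x \<bullet> (A *v x)"
proof -
  obtain m where m: "m \<in> eigvals A" "\<forall>x. m * (norm x)^2 \<le> x \<bullet> (A *v x)"
    using eigval_le_quadratic_form[OF sym] by blast
  have fin: "finite (eigvals A)" using finite_eigvals[OF sym] .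
  show "lambda_min A \<in> eigvals A" unfolding lambda_min_def using fin m(1) by (metis Min_in empty_iff)
  have "lambda_min A \<le> m" unfolding lambda_min_def using fin m(1) by simp
  then have "lambda_min A * (norm x)^2 \<le> m * (norm x)^2" by (rule mult_right_mono) simp
  with m(2) show "lambda_min A * (norm x)^2 \<le> x \<bullet> (A *v x)" by (meson order_trans)
qed

lemma uminus_matrix_vector_mult: "(- A) *v v = - ((A::real^'n^'m) *v v)"
  by (metis diff_0 matrix_vector_mult_0 matrix_vector_mult_diff_rdistrib)

lemma quadratic_form_le_lambda_max:
  fixes A :: "real^'n^'n"
  assumes sym: "\<And>x y. (A *v x) \<bullet> y = x \<bullet> (A *v y)"
  shows "x \<bullet> (A *v x) \<le> lambda_max A * (norm x)^2"
proof -
  obtain m where m: "m \<in> eigvals (- A)" "\<forall>x. m * (norm x)^2 \<le> x \<bullet> (- A *v x)"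
    using eigval_le_quadratic_form[of "- A"] sym by (auto simp: uminus_matrix_vector_mult)
  then obtain v where "v \<noteq> 0" "- (A *v v) = m *\<^sub>R v"
    unfolding eigvals_def by (auto simp: uminus_matrix_vector_mult)
  then have "A *v v = (- m) *\<^sub>R v" by (metis minus_minus scaleR_minus_left)
  with \<open>v \<noteq> 0\<close> have "- m \<in> eigvals A" unfolding eigvals_def by blast
  then have "- m \<le> lambda_max A" unfolding lambda_max_def using finite_eigvals[OF sym] by simp
  then have "- m * (norm x)^2 \<le> lambda_max A * (norm x)^2" by (rule mult_right_mono) simp
  then show ?thesis using m(2)[rule_format, of x] by (simp add: uminus_matrix_vector_mult)
qed

lemma inner_transpose_matrix_vector: "(transpose A *v x) \<bullet> y = x \<bullet> ((A::real^'n^'m) *v y)"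
  by (simp add: dot_lmul_matrix)

lemma inner_gram: "x \<bullet> ((transpose S ** S) *v y) = (S *v x) \<bullet> ((S::real^'n^'m) *v y)"
  by (metis inner_commute inner_transpose_matrix_vector matrix_vector_mul_assoc)

lemma gram_symmetric: "((transpose S ** S) *v x) \<bullet> y = x \<bullet> ((transpose S ** S) *v y)"
  for S :: "real^'n^'m"
  using inner_gram[of y S x] inner_gram[of x S y] by (simp add: inner_commute)

lemma quadratic_form_gram: "x \<bullet> ((transpose S ** S) *v x) = (norm (S *v x))^2"
  for S :: "real^'n^'m"
  by (simp only: inner_gram power2_norm_eq_inner)

lemma norm_mult_le_lambda_max_gram:
  "(norm (S *v x))^2 \<le> lambda_max (transpose S ** S) * (norm x)^2" for S :: "real^'n^'n"
  using quadratic_form_le_lambda_max[OF gram_symmetric] by (simp add: quadratic_form_gram)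

lemma continuous_on_matrix_vector_mult [continuous_intros]:
  "continuous_on S a \<Longrightarrow> continuous_on S b \<Longrightarrow> continuous_on S (\<lambda>x. (a x :: real^'n^'m) *v (b x :: real^'n))"
  unfolding matrix_vector_mult_def by (intro continuous_intros)

lemma continuous_on_transpose [continuous_intros]:
  "continuous_on S a \<Longrightarrow> continuous_on S (\<lambda>x. transpose (a x :: real^'n^'m))"
  unfolding transpose_def by (intro continuous_intros)

lemma bounded_linear_matrix_vector_mult_left: "bounded_linear (\<lambda>A::real^'n^'m. A *v v)"
  by (subst linear_conv_bounded_linear[symmetric])
     (rule linearI, auto simp: matrix_vector_mult_add_rdistrib scaleR_matrix_vector_assoc)

lemma bounded_linear_inner_matrix_vector: "bounded_linear (\<lambda>A::real^'n^'m. x \<bullet> (A *v y))"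
  using bounded_linear_compose[OF bounded_linear_inner_right bounded_linear_matrix_vector_mult_left] .

definition dsgd_step :: "(('n::finite) vec \<Rightarrow> 'n vec) \<Rightarrow> real \<Rightarrow> 'n vec \<Rightarrow> 'n vec \<Rightarrow> 'n mat \<Rightarrow> 'n vec"
  where "dsgd_step g \<gamma> s x A = x - \<gamma> *\<^sub>R (transpose A *v g (s + A *v (x - s)))"

lemma dsgd_Suc_step: "dsgd g \<gamma> s x0 Ss (Suc t) = dsgd_step g \<gamma> s (dsgd g \<gamma> s x0 Ss t) (Ss t)"
  by (simp add: dsgd_step_def)

lemma dsgd_cong: "(\<And>i. i < t \<Longrightarrow> Ss i = Ss' i) \<Longrightarrow> dsgd g \<gamma> s x0 Ss t = dsgd g \<gamma> s x0 Ss' t"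
  by (induction t) auto

lemma measurable_dsgd_step:
  assumes "continuous_on UNIV g"
  shows "(\<lambda>p. dsgd_step g \<gamma> s (fst p) (snd p)) \<in> borel_measurable (borel \<Otimes>\<^sub>M borel)"
  unfolding borel_prod dsgd_step_def
  by (intro borel_measurable_continuous_onI continuous_intros continuous_on_compose2[OF assms]) auto

lemma measurable_dsgd:
  assumes g: "continuous_on UNIV g" and Y: "\<And>i. i < t \<Longrightarrow> (\<lambda>\<omega>. Y \<omega> i) \<in> borel_measurable N"
  shows "(\<lambda>\<omega>. dsgd g \<gamma> s x0 (Y \<omega>) t) \<in> borel_measurable N"
  using Y
proof (induction t)
  case (Suc t)
  then have "(\<lambda>\<omega>. (dsgd g \<gamma> s x0 (Y \<omega>) t, Y \<omega> t)) \<in> measurable N (borel \<Otimes>\<^sub>M borel)"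
    by (intro measurable_Pair) auto
  from measurable_compose[OF this measurable_dsgd_step[OF g]] show ?case
    by (simp only: dsgd_Suc_step fst_conv snd_conv)
qed simp

lemma ennreal_affine_recursion_le:
  fixes E :: "nat \<Rightarrow> ennreal"
  assumes step: "\<And>t. E (Suc t) \<le> ennreal \<rho> * E t + ennreal C"
    and E0: "E 0 \<le> ennreal a" and "0 \<le> a" and "0 \<le> C" and "0 \<le> \<rho>" and "\<rho> < 1"
  shows "E t \<le> ennreal (\<rho>^t * a + C / (1 - \<rho>))"
proof (induction t)
  case 0
  show ?case using E0 assms by (simp add: ennreal_leI order.trans)
next
  case (Suc t)
  have "0 \<le> \<rho>^t * a + C / (1 - \<rho>)" using assms by simp
  have "E (Suc t) \<le> ennreal \<rho> * ennreal (\<rho>^t * a + C / (1 - \<rho>)) + ennreal C"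
    using step[of t] Suc.IH by (meson add_right_mono mult_left_mono order.trans zero_le)
  also have "\<dots> = ennreal (\<rho> * (\<rho>^t * a + C / (1 - \<rho>)) + C)"
    using assms \<open>0 \<le> \<rho>^t * a + C / (1 - \<rho>)\<close> by (simp add: ennreal_mult)
  also have "\<rho> * (\<rho>^t * a + C / (1 - \<rho>)) + C = \<rho>^Suc t * a + C / (1 - \<rho>)"
    using \<open>\<rho> < 1\<close> by (simp add: field_simps)
  finally show ?case .
qed

lemma (in prob_space) nn_integral_indep_component:
  fixes X :: "nat \<Rightarrow> 'a \<Rightarrow> 'b"
  assumes indep: "indep_vars (\<lambda>_. N) X UNIV"
    and X: "\<And>i. X i \<in> measurable M N"
    and F: "F \<in> measurable (PiM {..<t} (\<lambda>_. N)) K"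
    and \<phi>: "\<phi> \<in> borel_measurable (K \<Otimes>\<^sub>M N)"
  shows "(\<integral>\<^sup>+\<omega>. \<phi> (F (restrict (\<lambda>i. X i \<omega>) {..<t}), X t \<omega>) \<partial>M)
       = (\<integral>\<^sup>+\<omega>. (\<integral>\<^sup>+y. \<phi> (F (restrict (\<lambda>i. X i \<omega>) {..<t}), y) \<partial>distr M N (X t)) \<partial>M)"
proof -
  define N1 where "N1 = PiM {..<t} (\<lambda>_. N)"
  define N2 where "N2 = PiM {t} (\<lambda>_. N)"
  define R1 where "R1 \<omega> = restrict (\<lambda>i. X i \<omega>) {..<t}" for \<omega>
  define R2 where "R2 \<omega> = restrict (\<lambda>i. X i \<omega>) {t}" for \<omega>
  define \<psi> where "\<psi> p = \<phi> (F (fst p), snd p t)" for p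
  have "indep_var N1 R1 N2 R2"
    unfolding N1_def N2_def R1_def R2_def by (rule indep_var_restrict[OF indep]) auto
  then have R1: "R1 \<in> measurable M N1" and R2: "R2 \<in> measurable M N2"
    and pair: "distr M N1 R1 \<Otimes>\<^sub>M distr M N2 R2 = distr M (N1 \<Otimes>\<^sub>M N2) (\<lambda>\<omega>. (R1 \<omega>, R2 \<omega>))"
    unfolding indep_var_distribution_eq by auto
  interpret P2: prob_space "distr M N2 R2" by (rule prob_space_distr[OF R2])
  interpret PX: prob_space "distr M N (X t)" by (rule prob_space_distr[OF X])
  have \<phi>X: "\<phi> \<in> borel_measurable (K \<Otimes>\<^sub>M distr M N (X t))"
    using \<phi> by (subst measurable_cong_sets[OF sets_pair_measure_cong[OF refl sets_distr] refl])
  have \<psi>: "\<psi> \<in> borel_measurable (N1 \<Otimes>\<^sub>M N2)"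
    unfolding \<psi>_def N1_def N2_def
    by (intro measurable_compose[OF _ \<phi>] measurable_Pair measurable_compose[OF measurable_fst F]
        measurable_compose[OF measurable_snd measurable_component_singleton]) auto
  have inner: "(\<integral>\<^sup>+z. \<psi> (y, z) \<partial>distr M N2 R2) = (\<integral>\<^sup>+z. \<phi> (F y, z) \<partial>distr M N (X t))"
    if y: "y \<in> space N1" for y
  proof -
    have "(\<lambda>z. \<phi> (F y, z)) \<in> borel_measurable N"
      using measurable_Pair2[OF \<phi>] measurable_space[OF F] y by (simp add: N1_def)
    moreover have "(\<lambda>z. \<phi> (F y, z t)) \<in> borel_measurable N2"
      using measurable_Pair2[OF \<psi> y] by (simp add: \<psi>_def)
    ultimately show ?thesis
      using R2 X by (simp add: nn_integral_distr \<psi>_def R2_def)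
  qed
  have "(\<integral>\<^sup>+\<omega>. \<psi> (R1 \<omega>, R2 \<omega>) \<partial>M) = integral\<^sup>N (distr M N1 R1 \<Otimes>\<^sub>M distr M N2 R2) \<psi>"
    unfolding pair using \<psi> R1 R2 by (simp add: nn_integral_distr)
  also have "\<dots> = (\<integral>\<^sup>+y. (\<integral>\<^sup>+z. \<psi> (y, z) \<partial>distr M N2 R2) \<partial>distr M N1 R1)"
    using \<psi> by (intro P2.nn_integral_fst[symmetric]) (simp cong: measurable_cong_sets)
  also have "\<dots> = (\<integral>\<^sup>+y. (\<integral>\<^sup>+z. \<phi> (F y, z) \<partial>distr M N (X t)) \<partial>distr M N1 R1)"
    by (intro nn_integral_cong) (simp add: inner)
  also have "\<dots> = (\<integral>\<^sup>+\<omega>. (\<integral>\<^sup>+z. \<phi> (F (R1 \<omega>), z) \<partial>distr M N (X t)) \<partial>M)"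
    using measurable_compose[OF F PX.borel_measurable_nn_integral_fst[OF \<phi>X]] R1
    by (simp add: nn_integral_distr N1_def)
  finally show ?thesis by (simp add: \<psi>_def R1_def R2_def)
qed

locale smooth_strongly_convex =
  fixes Lf muf :: real and f :: "('n::finite) vec \<Rightarrow> real" and g :: "'n vec \<Rightarrow> 'n vec"
  assumes smooth: "L_smooth Lf f g" and strongly_convex: "strongly_convex muf f g"
begin

lemma smooth_upper: "f (x + h) \<le> f x + g x \<bullet> h + Lf / 2 * (norm h)\<^sup>2"
  using smooth unfolding L_smooth_def by blast

lemma strongly_convex_lower: "f x + g x \<bullet> h + muf / 2 * (norm h)\<^sup>2 \<le> f (x + h)"
  using strongly_convex unfolding strongly_convex_def by blast

lemma muf_pos: "0 < muf"
  using strongly_convex unfolding strongly_convex_def by blast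

lemma convex_lower: "f x + g x \<bullet> h \<le> f (x + h)"
proof -
  have "0 \<le> muf / 2 * (norm h)\<^sup>2" using muf_pos by simp
  then show ?thesis using strongly_convex_lower[of x h] by linarith
qed

lemma Inf_range_le: "Inf (range f) \<le> f x"
  using smooth unfolding L_smooth_def by (auto intro: cInf_lower)

lemma muf_le_Lf: "muf \<le> Lf"
proof -
  obtain i :: 'n where True by simp
  then show ?thesis
    using strongly_convex_lower[of 0 "axis i 1"] smooth_upper[of 0 "axis i 1"] by simp
qed

lemma Lf_pos: "0 < Lf"
  using muf_pos muf_le_Lf by linarith

lemma gradient_lipschitz: "norm (g (x + h) - g x) \<le> 2 * Lf * norm h"
proof -
  define d where "d = g (x + h) - g x"
  \<comment> \<open>Sandwich \<open>f (x + h + k)\<close> between the convexity bound at \<open>x + h\<close> and the smoothness bound at \<open>x\<close>.\<close>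
  have d_le: "d \<bullet> k \<le> Lf * ((norm h)^2 + (norm k)^2)" for k
  proof -
    have "f (x + h) + g (x + h) \<bullet> k \<le> f (x + h + k)" by (rule convex_lower)
    moreover have "f (x + h + k) \<le> f x + g x \<bullet> (h + k) + Lf / 2 * (norm (h + k))\<^sup>2"
      using smooth_upper[of x "h + k"] by (simp add: add.assoc)
    moreover have "f x + g x \<bullet> h \<le> f (x + h)" by (rule convex_lower)
    ultimately have "d \<bullet> k \<le> Lf / 2 * (norm (h + k))\<^sup>2"
      unfolding d_def by (simp add: inner_diff_left inner_add_right)
    also have "\<dots> \<le> Lf / 2 * (2 * ((norm h)^2 + (norm k)^2))"
    proof -
      have "(norm (h + k))\<^sup>2 \<le> (norm h + norm k)^2"
        using norm_triangle_ineq[of h k] by (simp add: power_mono)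
      also have "\<dots> \<le> 2 * ((norm h)^2 + (norm k)^2)"
        using sum_squares_bound[of "norm h" "norm k"] by (simp add: power2_sum)
      finally show ?thesis using Lf_pos by simp
    qed
    finally show ?thesis by (simp add: algebra_simps)
  qed
  show ?thesis
  proof (cases "h = 0 \<or> d = 0")
    case False
    define k where "k = (norm h / norm d) *\<^sub>R d"
    have "d \<bullet> k = norm h * norm d" and "norm k = norm h"
      using False unfolding k_def by (simp_all add: power2_norm_eq_inner[symmetric] power2_eq_square)
    then have "norm h * norm d \<le> norm h * (2 * Lf * norm h)"
      using d_le[of k] by (simp add: power2_eq_square algebra_simps)
    then show ?thesis using False unfolding d_def by simp
  qed (use Lf_pos d_def in auto)
qed

lemma continuous_on_gradient: "continuous_on UNIV g"
proof (rule lipschitz_on_continuous_on)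
  show "(2 * Lf)-lipschitz_on UNIV g"
    using gradient_lipschitz[of y "x - y" for x y] Lf_pos by (intro lipschitz_onI) (auto simp: dist_norm)
qed

lemma continuous_on_f: "continuous_on UNIV f"
  using smooth unfolding L_smooth_def
  by (blast intro: continuous_at_imp_continuous_on has_derivative_continuous)

lemma norm_sketched_gradient_le:
  assumes A: "\<And>z. (norm (A *v z))^2 \<le> L * (norm z)^2" and L: "0 < L"
  shows "(norm (transpose A *v g y))^2 \<le> 2 * Lf * L * (f y - Inf (range f))"
proof -
  define G where "G = transpose A *v g y"
  define c where "c = 1 / (Lf * L)"
  have c: "0 < c" "Lf * L * c = 1" unfolding c_def using Lf_pos L by simp_all
  \<comment> \<open>One gradient step of length \<open>c\<close> along the sketched direction decreases \<open>f\<close> by \<open>c/2 \<parallel>G\<parallel>\<^sup>2\<close>.\<close>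
  have "Inf (range f) \<le> f (y + A *v (- c *\<^sub>R G))" by (rule Inf_range_le)
  also have "\<dots> \<le> f y + g y \<bullet> (A *v (- c *\<^sub>R G)) + Lf / 2 * (norm (A *v (- c *\<^sub>R G)))^2"
    by (rule smooth_upper)
  also have "g y \<bullet> (A *v (- c *\<^sub>R G)) = - c * (norm G)^2"
    unfolding G_def inner_transpose_matrix_vector[symmetric] by (simp add: power2_norm_eq_inner)
  also have "Lf / 2 * (norm (A *v (- c *\<^sub>R G)))^2 \<le> Lf / 2 * (L * (norm (- c *\<^sub>R G))^2)"
    using A[of "- c *\<^sub>R G"] Lf_pos by (intro mult_left_mono) simp_all
  also have "Lf / 2 * (L * (norm (- c *\<^sub>R G))^2) = (Lf * L * c) * (c / 2 * (norm G)^2)"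
    using c by (simp add: power2_eq_square mult_ac)
  finally have "c * (norm G)^2 \<le> 2 * (f y - Inf (range f))" using c by simp
  then have "(Lf * L) * (c * (norm G)^2) \<le> (Lf * L) * (2 * (f y - Inf (range f)))"
    using Lf_pos L by (simp add: mult_left_mono)
  moreover have "(Lf * L) * (c * (norm G)^2) = (norm G)^2" using c by (metis mult.assoc mult_1)
  moreover have "(Lf * L) * (2 * (f y - Inf (range f))) = 2 * Lf * L * (f y - Inf (range f))"
    by (simp add: mult_ac)
  ultimately have "(norm G)^2 \<le> 2 * Lf * L * (f y - Inf (range f))" by linarith
  then show ?thesis by (simp only: G_def)
qed

lemma sketched_strong_convexity:
  "f (s + A *v (x - s)) - f (s + A *v (x' - s)) + muf / 2 * (norm (A *v (x - x')))^2
     \<le> (transpose A *v g (s + A *v (x - s))) \<bullet> (x - x')"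
proof -
  define y where "y = s + A *v (x - s)"
  define k where "k = A *v (x' - x)"
  have yk: "y + k = s + A *v (x' - s)"
    unfolding y_def k_def by (simp add: matrix_vector_right_distrib[symmetric] add.assoc)
  moreover have k: "k = - (A *v (x - x'))"
    unfolding k_def by (simp add: matrix_vector_mult_diff_distrib)
  then have "g y \<bullet> k = - ((transpose A *v g y) \<bullet> (x - x'))"
    by (simp only: inner_transpose_matrix_vector inner_minus_right)
  moreover have nk: "norm k = norm (A *v (x - x'))" using k by simp
  ultimately show ?thesis
    using strongly_convex_lower[of y k] unfolding yk nk y_def[symmetric] by linarith
qed

lemma dsgd_step_bound:
  assumes A: "\<And>z. (norm (A *v z))^2 \<le> L * (norm z)^2" and L: "0 < L" and \<gamma>: "0 < \<gamma>"
  shows "(norm (dsgd_step g \<gamma> s x A - x'))^2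
    \<le> (norm (x - x'))^2 - \<gamma> * muf * (norm (A *v (x - x')))^2
       + 2 * \<gamma> * (f (s + A *v (x' - s)) - Inf (range f))
       - 2 * \<gamma> * (1 - \<gamma> * Lf * L) * (f (s + A *v (x - s)) - Inf (range f))"
proof -
  define y where "y = s + A *v (x - s)"
  define G where "G = transpose A *v g y"
  define h where "h = x - x'"
  have "(norm (dsgd_step g \<gamma> s x A - x'))^2 = (norm (h - \<gamma> *\<^sub>R G))^2"
    unfolding dsgd_step_def G_def y_def h_def by (simp add: algebra_simps)
  also have "\<dots> = (norm h)^2 - 2 * (\<gamma> * (G \<bullet> h)) + \<gamma>^2 * (norm G)^2"
    unfolding power2_norm_eq_inner
    by (simp add: inner_diff_left inner_diff_right inner_commute power2_eq_square algebra_simps)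
  also have "\<dots> \<le> (norm h)^2 - 2 * (\<gamma> * (f y - f (s + A *v (x' - s)) + muf / 2 * (norm (A *v h))^2))
      + \<gamma>^2 * (2 * Lf * L * (f y - Inf (range f)))"
    using mult_left_mono[OF sketched_strong_convexity[of s A x x'] less_imp_le[OF \<gamma>]]
      mult_left_mono[OF norm_sketched_gradient_le[OF A L, of y], of "\<gamma>^2"]
    unfolding G_def y_def h_def by simp
  finally show ?thesis
    unfolding y_def h_def by (simp add: power2_eq_square algebra_simps)
qed

end

locale sketch_distribution = prob_space D for D :: "('n::finite) mat measure" +
  assumes sets_D: "sets D = sets borel"
    and integrable_sketch: "integrable D (\<lambda>S. S)" and expectation_sketch: "(\<integral>S. S \<partial>D) = mat 1"
    and integrable_gram: "integrable D (\<lambda>S. transpose S ** S)"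
    and bounded_lambda_max: "\<exists>L. AE S in D. lambda_max (transpose S ** S) \<le> L"
begin

lemma integrable_matrix_vector_mult: "integrable D (\<lambda>S. S *v x)"
  using integrable_bounded_linear[OF bounded_linear_matrix_vector_mult_left integrable_sketch] .

lemma integral_matrix_vector_mult: "(\<integral>S. S *v x \<partial>D) = x"
  using integral_bounded_linear[OF bounded_linear_matrix_vector_mult_left integrable_sketch]
  by (simp add: expectation_sketch)

lemma integrable_norm_matrix_vector_mult_sq: "integrable D (\<lambda>S. (norm (S *v x))^2)"
  using integrable_bounded_linear[OF bounded_linear_inner_matrix_vector integrable_gram, of x x]
  by (simp add: quadratic_form_gram)

lemma inner_expected_gram:
  "x \<bullet> ((\<integral>S. transpose S ** S \<partial>D) *v y) = (\<integral>S. (S *v x) \<bullet> (S *v y) \<partial>D)"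
  using integral_bounded_linear[OF bounded_linear_inner_matrix_vector integrable_gram, of x y]
  by (simp only: inner_gram)

lemma expected_gram_symmetric:
  "((\<integral>S. transpose S ** S \<partial>D) *v x) \<bullet> y = x \<bullet> ((\<integral>S. transpose S ** S \<partial>D) *v y)"
proof -
  have "((\<integral>S. transpose S ** S \<partial>D) *v x) \<bullet> y = (\<integral>S. (S *v y) \<bullet> (S *v x) \<partial>D)"
    by (subst inner_commute) (rule inner_expected_gram)
  also have "\<dots> = (\<integral>S. (S *v x) \<bullet> (S *v y) \<partial>D)" by (simp only: inner_commute)
  finally show ?thesis by (simp only: inner_expected_gram)
qed

lemma quadratic_form_expected_gram:
  "x \<bullet> ((\<integral>S. transpose S ** S \<partial>D) *v x) = (\<integral>S. (norm (S *v x))^2 \<partial>D)"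
  by (simp add: inner_expected_gram power2_norm_eq_inner)

lemma norm_sq_le_expected_norm_sq: "(norm x)^2 \<le> (\<integral>S. (norm (S *v x))^2 \<partial>D)"
proof -
  have "0 \<le> (\<integral>S. (norm (S *v x - x))^2 \<partial>D)" by simp
  also have "\<dots> = (\<integral>S. (norm (S *v x))^2 - 2 * ((S *v x) \<bullet> x) + (norm x)^2 \<partial>D)"
    by (rule Bochner_Integration.integral_cong)
       (simp_all add: power2_norm_eq_inner inner_diff_left inner_diff_right inner_commute)
  also have "\<dots> = (\<integral>S. (norm (S *v x))^2 \<partial>D) - (\<integral>S. 2 * ((S *v x) \<bullet> x) \<partial>D) + (norm x)^2"
    using integrable_norm_matrix_vector_mult_sq[of x] integrable_matrix_vector_mult[of x]
    by (simp add: prob_space)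
  also have "(\<integral>S. 2 * ((S *v x) \<bullet> x) \<partial>D) = 2 * (norm x)^2"
    using integrable_matrix_vector_mult[of x]
    by (simp add: integral_matrix_vector_mult power2_norm_eq_inner)
  finally show ?thesis by simp
qed

lemma mu_D_le_expected_norm_sq: "mu_D D * (norm x)^2 \<le> (\<integral>S. (norm (S *v x))^2 \<partial>D)"
  using lambda_min_le_quadratic_form[OF expected_gram_symmetric, of x]
  by (simp add: mu_D_def quadratic_form_expected_gram)

lemma mu_D_eigenvector:
  obtains v where "v \<noteq> 0" and "mu_D D * (norm v)^2 = (\<integral>S. (norm (S *v v))^2 \<partial>D)"
proof -
  have "mu_D D \<in> eigvals (\<integral>S. transpose S ** S \<partial>D)"
    unfolding mu_D_def by (rule lambda_min_in_eigvals[OF expected_gram_symmetric])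
  then obtain v where "v \<noteq> 0" and eig: "(\<integral>S. transpose S ** S \<partial>D) *v v = mu_D D *\<^sub>R v"
    unfolding eigvals_def by blast
  have "mu_D D * (norm v)^2 = v \<bullet> ((\<integral>S. transpose S ** S \<partial>D) *v v)"
    unfolding eig by (simp add: power2_norm_eq_inner)
  also have "\<dots> = (\<integral>S. (norm (S *v v))^2 \<partial>D)" by (rule quadratic_form_expected_gram)
  finally show ?thesis using \<open>v \<noteq> 0\<close> by (intro that)
qed

lemma mu_D_ge_1: "1 \<le> mu_D D"
proof -
  obtain v where "v \<noteq> 0" and "mu_D D * (norm v)^2 = (\<integral>S. (norm (S *v v))^2 \<partial>D)"
    by (rule mu_D_eigenvector)
  then have "1 * (norm v)^2 \<le> mu_D D * (norm v)^2" using norm_sq_le_expected_norm_sq[of v] by simp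
  moreover have "0 < (norm v)^2" using \<open>v \<noteq> 0\<close> by simp
  ultimately show ?thesis by (rule mult_right_le_imp_le)
qed

lemma AE_lambda_max_le_L_S_max: "AE S in D. lambda_max (transpose S ** S) \<le> L_S_max D"
proof -
  define Ls where "Ls = {L. AE S in D. lambda_max (transpose S ** S) \<le> L}"
  have "Ls \<noteq> {}" using bounded_lambda_max unfolding Ls_def by auto
  \<comment> \<open>The infimum is attained: approach it by the countably many bounds \<open>L_S_max D + 1/(n+1)\<close>.\<close>
  have "AE S in D. lambda_max (transpose S ** S) \<le> L_S_max D + inverse (real (Suc n))" for n
  proof -
    have "Inf Ls < L_S_max D + inverse (real (Suc n))" unfolding Ls_def L_S_max_def by simp
    then obtain L where "L \<in> Ls" "L < L_S_max D + inverse (real (Suc n))"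
      using cInf_lessD[OF \<open>Ls \<noteq> {}\<close>] by blast
    then show ?thesis unfolding Ls_def by (auto elim: AE_mp)
  qed
  then have "AE S in D. \<forall>n. lambda_max (transpose S ** S) \<le> L_S_max D + inverse (real (Suc n))"
    by (simp add: AE_all_countable)
  then show ?thesis
  proof eventually_elim
    case (elim S)
    show ?case
    proof (rule ccontr)
      assume "\<not> ?case"
      then obtain n where "inverse (real (Suc n)) < lambda_max (transpose S ** S) - L_S_max D"
        using reals_Archimedean[of "lambda_max (transpose S ** S) - L_S_max D"] by auto
      with elim[rule_format, of n] show False by linarith
    qed
  qed
qed

lemma AE_norm_matrix_vector_mult_le: "AE S in D. \<forall>z. (norm (S *v z))^2 \<le> L_S_max D * (norm z)^2"
  using AE_lambda_max_le_L_S_max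
proof eventually_elim
  case (elim S)
  show ?case
  proof
    fix z
    have "(norm (S *v z))^2 \<le> lambda_max (transpose S ** S) * (norm z)^2"
      by (rule norm_mult_le_lambda_max_gram)
    also have "\<dots> \<le> L_S_max D * (norm z)^2" using elim by (simp add: mult_right_mono)
    finally show "(norm (S *v z))^2 \<le> L_S_max D * (norm z)^2" .
  qed
qed

lemma mu_D_le_L_S_max: "mu_D D \<le> L_S_max D"
proof -
  obtain v where "v \<noteq> 0" and v: "mu_D D * (norm v)^2 = (\<integral>S. (norm (S *v v))^2 \<partial>D)"
    by (rule mu_D_eigenvector)
  note v
  also have "(\<integral>S. (norm (S *v v))^2 \<partial>D) \<le> (\<integral>S. L_S_max D * (norm v)^2 \<partial>D)"
    by (rule integral_mono_AE)
       (use integrable_norm_matrix_vector_mult_sq AE_norm_matrix_vector_mult_le in auto)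
  finally have "mu_D D * (norm v)^2 \<le> L_S_max D * (norm v)^2" by (simp add: prob_space)
  moreover have "0 < (norm v)^2" using \<open>v \<noteq> 0\<close> by simp
  ultimately show ?thesis by (rule mult_right_le_imp_le)
qed

lemma L_S_max_pos: "0 < L_S_max D"
  using mu_D_ge_1 mu_D_le_L_S_max by linarith

end

locale dsgd_setting = sketch_distribution D + smooth_strongly_convex Lf muf f g
  for D :: "('n::finite) mat measure" and Lf muf :: real and f :: "'n vec \<Rightarrow> real" and g
begin

lemma integrable_f_sketch: "integrable D (\<lambda>S. f (s + S *v v))"
proof (rule Bochner_Integration.integrable_bound)
  define b where "b S = \<bar>Inf (range f)\<bar> + \<bar>f s\<bar> + norm (g s) * norm (S *v v) + \<bar>Lf\<bar> / 2 * (norm (S *v v))^2"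
    for S :: "'n mat"
  show "integrable D b"
    unfolding b_def
    by (intro Bochner_Integration.integrable_add integrable_mult_right integrable_norm
        integrable_matrix_vector_mult integrable_norm_matrix_vector_mult_sq integrable_const)
  have "continuous_on UNIV (\<lambda>S::'n mat. f (s + S *v v))"
    by (intro continuous_on_compose2[OF continuous_on_f] continuous_intros) auto
  then show "(\<lambda>S. f (s + S *v v)) \<in> borel_measurable D"
    by (simp add: borel_measurable_continuous_onI measurable_cong_sets[OF sets_D refl])
  \<comment> \<open>\<open>f\<close> is squeezed between its infimum and the quadratic upper bound at \<open>s\<close>.\<close>
  show "AE S in D. norm (f (s + S *v v)) \<le> norm (b S)"
  proof (rule AE_I2)
    fix S :: "'n mat"
    have "f (s + S *v v) \<le> f s + norm (g s) * norm (S *v v) + Lf / 2 * (norm (S *v v))^2"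
      using smooth_upper[of s "S *v v"] norm_cauchy_schwarz[of "g s" "S *v v"] by linarith
    moreover have "Lf / 2 * (norm (S *v v))^2 \<le> \<bar>Lf\<bar> / 2 * (norm (S *v v))^2"
      by (intro mult_right_mono) auto
    moreover have "0 \<le> norm (g s) * norm (S *v v)" "0 \<le> \<bar>Lf\<bar> / 2 * (norm (S *v v))^2" by simp_all
    ultimately have "\<bar>f (s + S *v v)\<bar> \<le> b S"
      using Inf_range_le[of "s + S *v v"] abs_ge_self[of "Inf (range f)"] abs_ge_minus_self[of "Inf (range f)"]
        abs_ge_self[of "f s"] abs_ge_zero[of "f s"]
      unfolding abs_le_iff b_def by linarith
    then show "norm (f (s + S *v v)) \<le> norm (b S)" by simp
  qed
qed

lemma f_tilde_eq: "f_tilde D f s x = (\<integral>S. f (s + S *v (x - s)) \<partial>D)"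
  unfolding f_tilde_def f_sk_def ..

lemma Inf_le_f_tilde: "Inf (range f) \<le> f_tilde D f s x"
proof -
  have "(\<integral>S. Inf (range f) \<partial>D) \<le> (\<integral>S. f (s + S *v (x - s)) \<partial>D)"
    by (rule integral_mono[OF _ integrable_f_sketch]) (auto intro: Inf_range_le)
  then show ?thesis unfolding f_tilde_eq by (simp add: prob_space)
qed

lemma integral_dsgd_step_bound:
  assumes \<gamma>: "0 < \<gamma>" "\<gamma> * Lf * L_S_max D \<le> 1"
    and x': "\<forall>x. f_tilde D f s x' \<le> f_tilde D f s x"
  shows "(\<integral>A. (norm (x - x'))^2 - \<gamma> * muf * (norm (A *v (x - x')))^2
            + 2 * \<gamma> * (f (s + A *v (x' - s)) - Inf (range f))
            - 2 * \<gamma> * (1 - \<gamma> * Lf * L_S_max D) * (f (s + A *v (x - s)) - Inf (range f)) \<partial>D)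
    \<le> (1 - \<gamma> * mu_D D * muf) * (norm (x - x'))^2
       + 2 * \<gamma>^2 * Lf * L_S_max D * (f_tilde D f s x' - Inf (range f))"
    (is "integral\<^sup>L D ?R \<le> _")
proof -
  define c where "c = \<gamma> * Lf * L_S_max D"
  have "integral\<^sup>L D ?R = (norm (x - x'))^2 - \<gamma> * muf * (\<integral>A. (norm (A *v (x - x')))^2 \<partial>D)
       + 2 * \<gamma> * (f_tilde D f s x' - Inf (range f)) - 2 * \<gamma> * (1 - c) * (f_tilde D f s x - Inf (range f))"
    unfolding f_tilde_eq c_def
    by (simp add: integrable_norm_matrix_vector_mult_sq integrable_f_sketch prob_space
        Bochner_Integration.integral_add Bochner_Integration.integral_diff)
  moreover have "\<gamma> * muf * (mu_D D * (norm (x - x'))^2) \<le> \<gamma> * muf * (\<integral>A. (norm (A *v (x - x')))^2 \<partial>D)"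
    using mu_D_le_expected_norm_sq \<gamma> muf_pos by (simp add: mult_left_mono)
  moreover have "2 * \<gamma> * (1 - c) * (f_tilde D f s x' - Inf (range f))
      \<le> 2 * \<gamma> * (1 - c) * (f_tilde D f s x - Inf (range f))"
    using x' \<gamma> unfolding c_def by (intro mult_left_mono) auto
  ultimately have "integral\<^sup>L D ?R \<le> (norm (x - x'))^2 - \<gamma> * muf * (mu_D D * (norm (x - x'))^2)
      + 2 * \<gamma> * (f_tilde D f s x' - Inf (range f)) - 2 * \<gamma> * (1 - c) * (f_tilde D f s x' - Inf (range f))"
    by linarith
  then show ?thesis unfolding c_def by (simp add: power2_eq_square algebra_simps)
qed

lemma expected_dsgd_step_le:
  assumes \<gamma>: "0 < \<gamma>" "\<gamma> * Lf * L_S_max D \<le> 1"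
    and x': "\<forall>x. f_tilde D f s x' \<le> f_tilde D f s x"
  shows "(\<integral>\<^sup>+A. ennreal ((norm (dsgd_step g \<gamma> s x A - x'))^2) \<partial>D)
    \<le> ennreal ((1 - \<gamma> * mu_D D * muf) * (norm (x - x'))^2
       + 2 * \<gamma>^2 * Lf * L_S_max D * (f_tilde D f s x' - Inf (range f)))"
proof -
  define R where "R A = (norm (x - x'))^2 - \<gamma> * muf * (norm (A *v (x - x')))^2
      + 2 * \<gamma> * (f (s + A *v (x' - s)) - Inf (range f))
      - 2 * \<gamma> * (1 - \<gamma> * Lf * L_S_max D) * (f (s + A *v (x - s)) - Inf (range f))" for A
  have AE_le: "AE A in D. (norm (dsgd_step g \<gamma> s x A - x'))^2 \<le> R A"
    using AE_norm_matrix_vector_mult_le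
    by eventually_elim (use dsgd_step_bound[OF _ L_S_max_pos \<gamma>(1)] R_def in auto)
  then have "AE A in D. 0 \<le> R A"
    by eventually_elim (use zero_le_power2 order_trans in blast)
  moreover have "integrable D R"
    unfolding R_def
    by (intro Bochner_Integration.integrable_add Bochner_Integration.integrable_diff
        integrable_mult_right integrable_norm_matrix_vector_mult_sq integrable_f_sketch integrable_const)
  moreover have "(\<integral>\<^sup>+A. ennreal ((norm (dsgd_step g \<gamma> s x A - x'))^2) \<partial>D) \<le> (\<integral>\<^sup>+A. ennreal (R A) \<partial>D)"
    using AE_le by (intro nn_integral_mono_AE) (auto elim: AE_mp intro: ennreal_leI)
  ultimately have "(\<integral>\<^sup>+A. ennreal ((norm (dsgd_step g \<gamma> s x A - x'))^2) \<partial>D) \<le> ennreal (\<integral>A. R A \<partial>D)"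
    by (simp add: nn_integral_eq_integral)
  also have "\<dots> \<le> ennreal ((1 - \<gamma> * mu_D D * muf) * (norm (x - x'))^2
       + 2 * \<gamma>^2 * Lf * L_S_max D * (f_tilde D f s x' - Inf (range f)))"
    unfolding R_def by (intro ennreal_leI integral_dsgd_step_bound \<gamma> x')
  finally show ?thesis .
qed

lemma contraction_factor_nonneg:
  assumes "0 < \<gamma>" and "\<gamma> * Lf * L_S_max D \<le> 1"
  shows "0 \<le> 1 - \<gamma> * mu_D D * muf"
proof -
  have "mu_D D * muf \<le> L_S_max D * Lf"
    using mu_D_le_L_S_max muf_le_Lf mu_D_ge_1 muf_pos by (intro mult_mono) auto
  then have "\<gamma> * (mu_D D * muf) \<le> \<gamma> * (L_S_max D * Lf)"
    using assms(1) by (simp add: mult_left_mono)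
  then show ?thesis using assms(2) by (simp add: mult_ac)
qed

lemma expected_dsgd_recursion:
  fixes M :: "'w measure" and S :: "nat \<Rightarrow> 'w \<Rightarrow> 'n mat"
  assumes M: "prob_space M" and S_rv: "\<And>t. S t \<in> borel_measurable M"
    and S_indep: "prob_space.indep_vars M (\<lambda>_. borel) S UNIV"
    and S_distr: "\<And>t. distr M borel (S t) = D"
    and \<gamma>: "0 < \<gamma>" "\<gamma> * Lf * L_S_max D \<le> 1"
    and x': "\<forall>x. f_tilde D f s x' \<le> f_tilde D f s x"
  shows "(\<integral>\<^sup>+\<omega>. ennreal ((norm (dsgd g \<gamma> s x0 (\<lambda>t. S t \<omega>) (Suc t) - x'))^2) \<partial>M)
    \<le> ennreal (1 - \<gamma> * mu_D D * muf)
        * (\<integral>\<^sup>+\<omega>. ennreal ((norm (dsgd g \<gamma> s x0 (\<lambda>t. S t \<omega>) t - x'))^2) \<partial>M)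
      + ennreal (2 * \<gamma>^2 * Lf * L_S_max D * (f_tilde D f s x' - Inf (range f)))"
proof -
  interpret M: prob_space M by (rule M)
  define \<rho> where "\<rho> = 1 - \<gamma> * mu_D D * muf"
  define C where "C = 2 * \<gamma>^2 * Lf * L_S_max D * (f_tilde D f s x' - Inf (range f))"
  define X where "X \<omega> = dsgd g \<gamma> s x0 (\<lambda>t. S t \<omega>) t" for \<omega>
  define \<phi> where "\<phi> p = ennreal ((norm (dsgd_step g \<gamma> s (fst p) (snd p) - x'))^2)" for p
  have \<rho>: "0 \<le> \<rho>" unfolding \<rho>_def by (rule contraction_factor_nonneg[OF \<gamma>])
  have C: "0 \<le> C" unfolding C_def using Inf_le_f_tilde[of s x'] Lf_pos L_S_max_pos by simp
  have \<phi>: "\<phi> \<in> borel_measurable (borel \<Otimes>\<^sub>M borel)"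
    unfolding \<phi>_def using measurable_dsgd_step[OF continuous_on_gradient] by measurable
  have F: "(\<lambda>y. dsgd g \<gamma> s x0 y t) \<in> borel_measurable (PiM {..<t} (\<lambda>_. borel))"
    by (rule measurable_dsgd[where Y = "\<lambda>y. y", OF continuous_on_gradient]) simp
  have X_restrict: "X \<omega> = dsgd g \<gamma> s x0 (restrict (\<lambda>i. S i \<omega>) {..<t}) t" for \<omega>
    unfolding X_def by (rule dsgd_cong) simp
  have X: "X \<in> borel_measurable M"
    unfolding X_def by (rule measurable_dsgd[OF continuous_on_gradient]) (simp add: S_rv)
  have "(\<integral>\<^sup>+\<omega>. ennreal ((norm (dsgd g \<gamma> s x0 (\<lambda>t. S t \<omega>) (Suc t) - x'))^2) \<partial>M)
      = (\<integral>\<^sup>+\<omega>. \<phi> (dsgd g \<gamma> s x0 (restrict (\<lambda>i. S i \<omega>) {..<t}) t, S t \<omega>) \<partial>M)"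
    unfolding \<phi>_def dsgd_Suc_step X_restrict[unfolded X_def] by simp
  also have "\<dots> = (\<integral>\<^sup>+\<omega>. (\<integral>\<^sup>+A. \<phi> (X \<omega>, A) \<partial>D) \<partial>M)"
    unfolding X_restrict M.nn_integral_indep_component[OF S_indep S_rv F \<phi>] S_distr ..
  also have "\<dots> \<le> (\<integral>\<^sup>+\<omega>. ennreal (\<rho> * (norm (X \<omega> - x'))^2 + C) \<partial>M)"
    unfolding \<phi>_def \<rho>_def C_def
    by (intro nn_integral_mono) (simp add: expected_dsgd_step_le[OF \<gamma> x'])
  also have "\<dots> = ennreal \<rho> * (\<integral>\<^sup>+\<omega>. ennreal ((norm (X \<omega> - x'))^2) \<partial>M) + ennreal C"
    using \<rho> C X
    by (simp add: ennreal_mult nn_integral_add nn_integral_cmult M.emeasure_space_1)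
  finally show ?thesis unfolding \<rho>_def C_def X_def .
qed

end

theorem theorem2:
  fixes f :: "('n::finite) vec \<Rightarrow> real" and g :: "'n vec \<Rightarrow> 'n vec"
    and s x0 xstar :: "'n vec"
    and D :: "'n mat measure"
    and M :: "'w measure" and S :: "nat \<Rightarrow> 'w \<Rightarrow> 'n mat"
    and Lf muf \<gamma> :: real and T :: nat
  assumes smooth: "L_smooth Lf f g"
    and sconv: "strongly_convex muf f g"
    and D_prob: "prob_space D" and D_sets: "sets D = sets borel"
    and ES_int: "integrable D (\<lambda>S. S)" and ES: "(\<integral>S. S \<partial>D) = mat 1"
    and ESS_int: "integrable D (\<lambda>S. transpose S ** S)"
    and Lmax_fin: "\<exists>L. AE S in D. lambda_max (transpose S ** S) \<le> L"
    and xstar_min: "\<forall>x. f_tilde D f s xstar \<le> f_tilde D f s x"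
    and gamma_pos: "0 < \<gamma>" and gamma_le: "\<gamma> \<le> 1 / (Lf * L_S_max D)"
    and M_prob: "prob_space M"
    and S_rv: "\<And>t. S t \<in> borel_measurable M"
    and S_indep: "prob_space.indep_vars M (\<lambda>_. borel) S UNIV"
    and S_distr: "\<And>t. distr M borel (S t) = D"
  shows "(\<integral>\<^sup>+\<omega>. ennreal ((norm (dsgd g \<gamma> s x0 (\<lambda>t. S t \<omega>) T - xstar))\<^sup>2) \<partial>M)
     \<le> ennreal ((1 - \<gamma> * mu_D D * muf) ^ T * (norm (x0 - xstar))\<^sup>2
          + 2 * \<gamma> * Lf * L_S_max D / (muf * mu_D D)
            * (Inf (range (f_tilde D f s)) - Inf (range f)))"
proof -
  interpret dsgd_setting D Lf muf f g
    using D_prob D_sets ES_int ES ESS_int Lmax_fin smooth sconv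
    by (simp add: dsgd_setting_def sketch_distribution_def sketch_distribution_axioms_def
        smooth_strongly_convex_def)
  define \<rho> where "\<rho> = 1 - \<gamma> * mu_D D * muf"
  define C where "C = 2 * \<gamma>^2 * Lf * L_S_max D * (f_tilde D f s xstar - Inf (range f))"
  have \<gamma>: "\<gamma> * Lf * L_S_max D \<le> 1"
    using gamma_le Lf_pos L_S_max_pos by (simp add: field_simps)
  have \<rho>: "0 \<le> \<rho>" "\<rho> < 1"
    unfolding \<rho>_def using contraction_factor_nonneg[OF gamma_pos \<gamma>] gamma_pos mu_D_ge_1 muf_pos by auto
  have "(\<integral>\<^sup>+\<omega>. ennreal ((norm (dsgd g \<gamma> s x0 (\<lambda>t. S t \<omega>) T - xstar))\<^sup>2) \<partial>M)
      \<le> ennreal (\<rho> ^ T * (norm (x0 - xstar))\<^sup>2 + C / (1 - \<rho>))"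
    using expected_dsgd_recursion[OF M_prob S_rv S_indep S_distr gamma_pos \<gamma> xstar_min]
      Inf_le_f_tilde[of s xstar] Lf_pos L_S_max_pos \<rho>
    unfolding \<rho>_def C_def
    by (intro ennreal_affine_recursion_le) (simp_all add: prob_space.emeasure_space_1[OF M_prob])
  also have "C / (1 - \<rho>) = 2 * \<gamma> * Lf * L_S_max D / (muf * mu_D D)
      * (Inf (range (f_tilde D f s)) - Inf (range f))"
  proof -
    have "Inf (range (f_tilde D f s)) = f_tilde D f s xstar"
      by (rule cInf_eq_minimum) (use xstar_min in auto)
    then show ?thesis
      unfolding C_def \<rho>_def using gamma_pos mu_D_ge_1 muf_pos by (simp add: field_simps power2_eq_square)
  qed
  finally show ?thesis unfolding \<rho>_def .
qed

end
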